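(* Let $(G,S,k)$ be an instance of \textsc{Edge Subset Feedback Vertex Set}, let $T=V(S)$, let $X$ be a dominant solution for $(G,S,k)$, and let $X_0=X\setminus T$. Then every nonempty set $Y\subseteq X_0$ sees at least $|Y|+2$ interesting components of $G-X-S$.
   Context: Graphs are finite and undirected and may contain loops and parallel edges (so cycles of length one and two are allowed). An instance of \textsc{Edge Subset Feedback Vertex Set} is $(G,S,k)$ with $G=(V,E)$, $S\subseteq E$, $k\in\mathbb{N}$. An $S$-cycle is a cycle containing at least one edge of $S$. A solution is a set $X\subseteq V$ with $|X|\le k$ such that $G-X$ contains no $S$-cycle. $V(S)$ is the set of vertices incident with an edge of $S$; $G-X-S$ is the graph obtained from $G$ by deleting the vertices of $X$ and the edges of $S$. A solution $X$ is dominant if it has minimum size among all solutions and, among minimum-size solutions, contains the maximum possible number of vertices of $T$. A connected component $K$ of $G-X-S$ is interesting if it contains a vertex of $T$. A vertex $x\in X_0$ sees a component $K$ if $x$ is adjacent in $G$ to some vertex of $K$; a set $Y\subseteq X_0$ sees $K$ if some $y\in Y$ sees $K$. *)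

theory Defs
  imports Main
begin

text \<open>A finite multigraph (loops and parallel edges allowed): vertex set V, edge set E,
  and an endpoint map ends assigning to each edge an (unordered) pair of endpoints,
  represented as a pair whose order is irrelevant.\<close>

definition multigraph :: "'v set \<Rightarrow> 'e set \<Rightarrow> ('e \<Rightarrow> 'v \<times> 'v) \<Rightarrow> bool" where
  "multigraph V E ends \<longleftrightarrow> finite V \<and> finite E \<and>
     (\<forall>e\<in>E. fst (ends e) \<in> V \<and> snd (ends e) \<in> V)"

definition joins :: "('e \<Rightarrow> 'v \<times> 'v) \<Rightarrow> 'e \<Rightarrow> 'v \<Rightarrow> 'v \<Rightarrow> bool" where
  "joins ends e u w \<longleftrightarrow> ends e = (u, w) \<or> ends e = (w, u)"

text \<open>A cycle with vertex sequence vs and edge sequence es (length n \<ge> 1):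
  distinct vertices, distinct edges, edge i joins vertex i and vertex i+1 (mod n).
  n = 1 is a loop, n = 2 a pair of parallel edges.\<close>

definition is_cycle :: "'v set \<Rightarrow> 'e set \<Rightarrow> ('e \<Rightarrow> 'v \<times> 'v) \<Rightarrow> 'v list \<Rightarrow> 'e list \<Rightarrow> bool" where
  "is_cycle V E ends vs es \<longleftrightarrow>
     length vs \<ge> 1 \<and> length es = length vs \<and> distinct vs \<and> distinct es \<and>
     set vs \<subseteq> V \<and> set es \<subseteq> E \<and>
     (\<forall>i < length vs. joins ends (es ! i) (vs ! i) (vs ! ((i + 1) mod length vs)))"

definition edges_del :: "'e set \<Rightarrow> ('e \<Rightarrow> 'v \<times> 'v) \<Rightarrow> 'v set \<Rightarrow> 'e set" where
  "edges_del E ends X = {e \<in> E. fst (ends e) \<notin> X \<and> snd (ends e) \<notin> X}"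

definition has_S_cycle :: "'v set \<Rightarrow> 'e set \<Rightarrow> ('e \<Rightarrow> 'v \<times> 'v) \<Rightarrow> 'e set \<Rightarrow> bool" where
  "has_S_cycle V E ends S \<longleftrightarrow> (\<exists>vs es. is_cycle V E ends vs es \<and> set es \<inter> S \<noteq> {})"

definition is_solution ::
  "'v set \<Rightarrow> 'e set \<Rightarrow> ('e \<Rightarrow> 'v \<times> 'v) \<Rightarrow> 'e set \<Rightarrow> nat \<Rightarrow> 'v set \<Rightarrow> bool" where
  "is_solution V E ends S k X \<longleftrightarrow> X \<subseteq> V \<and> card X \<le> k \<and>
     \<not> has_S_cycle (V - X) (edges_del E ends X) ends S"

definition VS :: "('e \<Rightarrow> 'v \<times> 'v) \<Rightarrow> 'e set \<Rightarrow> 'v set" where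
  "VS ends S = {v. \<exists>e\<in>S. v = fst (ends e) \<or> v = snd (ends e)}"

definition dominant ::
  "'v set \<Rightarrow> 'e set \<Rightarrow> ('e \<Rightarrow> 'v \<times> 'v) \<Rightarrow> 'e set \<Rightarrow> nat \<Rightarrow> 'v set \<Rightarrow> bool" where
  "dominant V E ends S k X \<longleftrightarrow> is_solution V E ends S k X \<and>
     (\<forall>X'. is_solution V E ends S k X' \<longrightarrow> card X \<le> card X') \<and>
     (\<forall>X'. is_solution V E ends S k X' \<and> card X' = card X \<longrightarrow>
            card (X' \<inter> VS ends S) \<le> card (X \<inter> VS ends S))"

definition adj_GXS :: "'v set \<Rightarrow> 'e set \<Rightarrow> ('e \<Rightarrow> 'v \<times> 'v) \<Rightarrow> 'e set \<Rightarrow> 'v set \<Rightarrow> 'v \<Rightarrow> 'v \<Rightarrow> bool" where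
  "adj_GXS V E ends S X u w \<longleftrightarrow> u \<in> V - X \<and> w \<in> V - X \<and>
     (\<exists>e \<in> edges_del E ends X - S. joins ends e u w)"

definition components_GXS :: "'v set \<Rightarrow> 'e set \<Rightarrow> ('e \<Rightarrow> 'v \<times> 'v) \<Rightarrow> 'e set \<Rightarrow> 'v set \<Rightarrow> 'v set set" where
  "components_GXS V E ends S X =
     {{w \<in> V - X. (adj_GXS V E ends S X)\<^sup>*\<^sup>* v w} | v. v \<in> V - X}"

definition sees :: "'e set \<Rightarrow> ('e \<Rightarrow> 'v \<times> 'v) \<Rightarrow> 'v \<Rightarrow> 'v set \<Rightarrow> bool" where
  "sees E ends x K \<longleftrightarrow> (\<exists>e\<in>E. \<exists>u\<in>K. joins ends e x u)"

end

theory Submission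
  imports Defs
begin

text \<open>Suppose a nonempty Y \<subseteq> X - V(S) sees at most |Y| + 1 interesting components of
  G - X - S. Since every S-edge of G - X is a bridge of G - X, some set D of at most |Y|
  S-edges of G - X separates these components pairwise in G - X - D. Exchanging Y for one
  endpoint of each edge of D, a set Z \<subseteq> V(S), yields again a solution: an S-cycle avoiding
  X - Y \<union> Z must visit Y, and its stretch between the visits of Y just before and just after
  one of its S-edges runs inside G - X - D between two components seen by Y and interesting,
  so these coincide and the S-edge would close an S-cycle in G - X. The new solution is not
  larger than X but contains more vertices of V(S), contradicting dominance.\<close>

section \<open>Walks and cycles in multigraphs\<close>

definition adj_via :: "('e \<Rightarrow> 'v \<times> 'v) \<Rightarrow> 'e set \<Rightarrow> 'v \<Rightarrow> 'v \<Rightarrow> bool" where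
  "adj_via ends F x y \<longleftrightarrow> (\<exists>e\<in>F. joins ends e x y)"

abbreviation reach :: "('e \<Rightarrow> 'v \<times> 'v) \<Rightarrow> 'e set \<Rightarrow> 'v \<Rightarrow> 'v \<Rightarrow> bool" where
  "reach ends F \<equiv> (adj_via ends F)\<^sup>*\<^sup>*"

definition is_walk ::
  "('e \<Rightarrow> 'v \<times> 'v) \<Rightarrow> 'e set \<Rightarrow> (nat \<Rightarrow> 'v) \<Rightarrow> (nat \<Rightarrow> 'e) \<Rightarrow> nat \<Rightarrow> nat \<Rightarrow> bool" where
  "is_walk ends F v f i j \<longleftrightarrow> (\<forall>d. i \<le> d \<longrightarrow> d < j \<longrightarrow> f d \<in> F \<and> joins ends (f d) (v d) (v (Suc d)))"

lemma joins_sym: "joins ends e x y \<Longrightarrow> joins ends e y x"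
  by (auto simp: joins_def)

lemma joins_endpoints:
  "joins ends e x y \<Longrightarrow> (x = fst (ends e) \<and> y = snd (ends e)) \<or> (x = snd (ends e) \<and> y = fst (ends e))"
  by (auto simp: joins_def)

lemma reach_sym: "reach ends F x y \<Longrightarrow> reach ends F y x"
  by (rule sympD[OF symp_rtranclp]) (auto simp: symp_def adj_via_def joins_def)

lemma reach_mono: "reach ends F x y \<Longrightarrow> F \<subseteq> G \<Longrightarrow> reach ends G x y"
  by (erule mono_rtranclp[rule_format, rotated]) (auto simp: adj_via_def)

lemma reach_edge: "e \<in> F \<Longrightarrow> joins ends e x y \<Longrightarrow> reach ends F x y"
  by (rule r_into_rtranclp) (auto simp: adj_via_def)

lemma is_walk_mono:
  "is_walk ends F v f i j \<Longrightarrow> i \<le> i' \<Longrightarrow> j' \<le> j \<Longrightarrow> F \<subseteq> G \<Longrightarrow> is_walk ends G v f i' j'"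
  by (auto simp: is_walk_def)

lemma is_walk_reach: "is_walk ends F v f i j \<Longrightarrow> i \<le> j \<Longrightarrow> reach ends F (v i) (v j)"
proof (induction j)
  case (Suc j)
  show ?case
  proof (cases "i = Suc j")
    case False
    with Suc.prems have "i \<le> j" by simp
    with Suc have "reach ends F (v i) (v j)" by (auto simp: is_walk_def)
    moreover have "f j \<in> F" "joins ends (f j) (v j) (v (Suc j))"
      using Suc.prems(1) \<open>i \<le> j\<close> by (auto simp: is_walk_def)
    ultimately show ?thesis
      using rtranclp.rtrancl_into_rtrancl[of _ "v i" "v j"] unfolding adj_via_def by blast
  qed simp
qed simp

lemma reach_imp_walk:
  "reach ends F u w \<Longrightarrow> \<exists>m v f. is_walk ends F v f 0 m \<and> v 0 = u \<and> v m = w"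
proof (induction rule: rtranclp_induct)
  case base
  show ?case by (rule exI[of _ 0]) (auto simp: is_walk_def)
next
  case (step y z)
  then obtain m v f where walk: "is_walk ends F v f 0 m" "v 0 = u" "v m = y" by blast
  from step(2) obtain e where "e \<in> F" "joins ends e y z" by (auto simp: adj_via_def)
  with walk have "is_walk ends F (v(Suc m := z)) (f(m := e)) 0 (Suc m)"
    by (auto simp: is_walk_def less_Suc_eq)
  with walk show ?case by (intro exI[of _ "Suc m"]) auto
qed

text \<open>Cutting out the closed subwalk between two visits of the same vertex.\<close>
lemma is_walk_shortcut:
  assumes walk: "is_walk ends F v f 0 m" and ij: "i < j" "j \<le> m" "v i = v j"
  shows "is_walk ends F (\<lambda>k. if k \<le> i then v k else v (k + (j - i)))
                        (\<lambda>k. if k < i then f k else f (k + (j - i))) 0 (m - (j - i))"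
  unfolding is_walk_def
proof (intro allI impI)
  fix d assume "d < m - (j - i)"
  then show "(if d < i then f d else f (d + (j - i))) \<in> F \<and>
      joins ends (if d < i then f d else f (d + (j - i)))
        (if d \<le> i then v d else v (d + (j - i))) (if Suc d \<le> i then v (Suc d) else v (Suc d + (j - i)))"
    using walk ij by (cases "d < i") (auto simp: is_walk_def)
qed

lemma is_walk_edges_inj:
  assumes "is_walk ends F v f 0 m" "inj_on v {0..m}"
  shows "inj_on f {0..<m}"
proof (rule inj_onI)
  fix i j assume i: "i \<in> {0..<m}" and j: "j \<in> {0..<m}" and "f i = f j"
  moreover have "joins ends (f i) (v i) (v (Suc i))" "joins ends (f j) (v j) (v (Suc j))"
    using assms(1) i j by (auto simp: is_walk_def)
  ultimately have "(v i = v j \<and> v (Suc i) = v (Suc j)) \<or> (v i = v (Suc j) \<and> v (Suc i) = v j)"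
    by (auto simp: joins_def)
  moreover have inj: "x = y" if "v x = v y" "x \<le> m" "y \<le> m" for x y
    using inj_onD[OF assms(2) that(1)] that(2,3) by simp
  ultimately show "i = j"
  proof
    assume "v i = v (Suc j) \<and> v (Suc i) = v j"
    then have "i = Suc j" "Suc i = j" using inj i j by auto
    then show "i = j" by simp
  qed (use inj i j in auto)
qed

lemma reach_imp_path:
  assumes "reach ends F u w"
  obtains m v f where "is_walk ends F v f 0 m" "v 0 = u" "v m = w"
    "inj_on v {0..m}" "inj_on f {0..<m}"
proof -
  let ?walk = "\<lambda>m. \<exists>v f. is_walk ends F v f 0 m \<and> v 0 = u \<and> v m = w"
  define m where "m = (LEAST m. ?walk m)"
  have "?walk m"
    unfolding m_def by (rule LeastI_ex) (use reach_imp_walk[OF assms] in blast)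
  then obtain v f where walk: "is_walk ends F v f 0 m" "v 0 = u" "v m = w" by blast
  have "v i \<noteq> v j" if "i < j" "j \<le> m" for i j
  proof
    assume "v i = v j"
    let ?v = "\<lambda>k. if k \<le> i then v k else v (k + (j - i))"
    have "is_walk ends F ?v (\<lambda>k. if k < i then f k else f (k + (j - i))) 0 (m - (j - i))"
      using is_walk_shortcut[OF walk(1) that \<open>v i = v j\<close>] .
    moreover have "?v 0 = u" using walk by simp
    moreover have "?v (m - (j - i)) = w"
    proof (cases "m - (j - i) \<le> i")
      case True
      with that have "j = m" "m - (j - i) = i" by linarith+
      with walk \<open>v i = v j\<close> show ?thesis by simp
    qed (use walk that in simp)
    ultimately have "?walk (m - (j - i))" by blast
    then have "m \<le> m - (j - i)" unfolding m_def by (rule Least_le)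
    with that show False by linarith
  qed
  then have "inj_on v {0..m}"
    by (intro inj_onI) (metis atLeastAtMost_iff linorder_neq_iff)
  with walk show thesis by (intro that) (auto intro: is_walk_edges_inj)
qed

lemma has_S_cycleI:
  assumes F_ends: "\<And>g. g \<in> F \<Longrightarrow> fst (ends g) \<in> W \<and> snd (ends g) \<in> W"
    and e: "e \<in> F" "e \<in> S" "joins ends e a b" and reach: "reach ends (F - {e}) a b"
  shows "has_S_cycle W F ends S"
proof -
  obtain m v f where path: "is_walk ends (F - {e}) v f 0 m" "v 0 = a" "v m = b"
    "inj_on v {0..m}" "inj_on f {0..<m}"
    by (rule reach_imp_path[OF reach])
  define vs where "vs = map v [0..<Suc m]"
  define es where "es = map f [0..<m] @ [e]"
  have in_W: "x \<in> W \<and> y \<in> W" if "g \<in> F" "joins ends g x y" for g x y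
    using F_ends[OF that(1)] joins_endpoints[OF that(2)] by auto
  have f_in: "f i \<in> F - {e}" if "i < m" for i
    using path(1) that by (auto simp: is_walk_def)
  have "v i \<in> W" if "i \<le> m" for i
  proof (cases "i = m")
    case True
    then show ?thesis using in_W[OF e(1,3)] path(3) by simp
  next
    case False
    with that have "f i \<in> F" "joins ends (f i) (v i) (v (Suc i))"
      using path(1) by (auto simp: is_walk_def)
    then show ?thesis using in_W by blast
  qed
  then have "set vs \<subseteq> W" by (auto simp: vs_def)
  moreover have "distinct vs"
    using path(4) by (simp add: vs_def distinct_map atLeastLessThanSuc_atLeastAtMost del: upt_Suc)
  moreover have "distinct es"
    using path(5) f_in by (fastforce simp: es_def distinct_map)
  moreover have "set es \<subseteq> F" using f_in e(1) by (auto simp: es_def)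
  moreover have "joins ends (es ! i) (vs ! i) (vs ! ((i + 1) mod length vs))"
    if "i < length vs" for i
  proof (cases "i < m")
    case True
    then show ?thesis
      using path(1) by (simp add: es_def vs_def nth_append is_walk_def del: upt_Suc)
  next
    case False
    with that have "i = m" by (simp add: vs_def)
    then show ?thesis
      using path(2,3) joins_sym[OF e(3)] by (simp add: es_def vs_def nth_append del: upt_Suc)
  qed
  moreover have "length vs = Suc m" "length es = Suc m" by (simp_all add: vs_def es_def)
  ultimately have "is_cycle W F ends vs es"
    unfolding is_cycle_def by simp
  moreover have "set es \<inter> S \<noteq> {}" using e(2) by (simp add: es_def)
  ultimately show ?thesis unfolding has_S_cycle_def by blast
qed

lemma is_cycle_edge_endpoints:
  assumes "is_cycle W F ends vs es" "g \<in> set es"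
  shows "fst (ends g) \<in> set vs \<and> snd (ends g) \<in> set vs"
proof -
  from assms obtain i where i: "i < length vs" "g = es ! i"
    by (auto simp: is_cycle_def in_set_conv_nth)
  with assms(1) have "joins ends g (vs ! i) (vs ! ((i + 1) mod length vs))"
    by (auto simp: is_cycle_def)
  moreover have "(i + 1) mod length vs < length vs" using i(1) by (intro mod_less_divisor) linarith
  then have "vs ! i \<in> set vs" "vs ! ((i + 1) mod length vs) \<in> set vs"
    using i(1) nth_mem by blast+
  ultimately show ?thesis
    by (auto dest: joins_endpoints)
qed

lemma is_cycle_edges_del:
  assumes "is_cycle W F ends vs es" "set es \<subseteq> E" "set vs \<subseteq> V - X"
  shows "is_cycle (V - X) (edges_del E ends X) ends vs es"
  using assms is_cycle_edge_endpoints[OF assms(1)]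
  by (fastforce simp: is_cycle_def edges_del_def)

text \<open>Going once around a cycle, starting and ending at its j-th vertex.\<close>
lemma is_cycle_unroll:
  assumes cycle: "is_cycle W F ends vs es" and j: "j < length vs"
  obtains vv ff where "vv 0 = vs ! j" "vv (length vs) = vs ! j" "\<And>d. vv d \<in> set vs"
    "\<And>d. joins ends (ff d) (vv d) (vv (Suc d))"
    "inj_on ff {..<length vs}" "ff ` {..<length vs} = set es"
proof
  let ?n = "length vs"
  have n: "0 < ?n" "length es = ?n" using cycle by (auto simp: is_cycle_def)
  show "vs ! ((j + 0) mod ?n) = vs ! j" "vs ! ((j + ?n) mod ?n) = vs ! j"
    using j by simp_all
  show "vs ! ((j + d) mod ?n) \<in> set vs" for d
    using n by simp
  show "joins ends (es ! ((j + d) mod ?n)) (vs ! ((j + d) mod ?n)) (vs ! ((j + Suc d) mod ?n))" for d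
  proof -
    have "joins ends (es ! ((j + d) mod ?n)) (vs ! ((j + d) mod ?n)) (vs ! (((j + d) mod ?n + 1) mod ?n))"
      using cycle n(1) by (simp add: is_cycle_def)
    then show ?thesis by (simp add: mod_Suc_eq)
  qed
  have rotate: "es ! ((j + d) mod ?n) = rotate j es ! d" if "d < ?n" for d
    using that n(2) by (simp add: nth_rotate)
  have "inj_on (nth (rotate j es)) {..<?n}"
    using cycle n(2) by (intro inj_on_nth) (auto simp: is_cycle_def)
  then show "inj_on (\<lambda>d. es ! ((j + d) mod ?n)) {..<?n}"
    by (rule inj_on_cong[THEN iffD1, rotated]) (simp add: rotate)
  have "(\<lambda>d. es ! ((j + d) mod ?n)) ` {..<?n} = nth (rotate j es) ` {..<length (rotate j es)}"
    using n(2) rotate by (intro image_cong) auto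
  also have "\<dots> = set es"
    using nth_image[of "length (rotate j es)" "rotate j es"] by (simp add: atLeast0LessThan)
  finally show "(\<lambda>d. es ! ((j + d) mod ?n)) ` {..<?n} = set es" .
qed

lemma enclosing_gap:
  fixes P :: "nat \<Rightarrow> bool"
  assumes "P 0" "P n" "t < n" "\<not> P t" "\<not> P (Suc t)"
  obtains p q where "p < t" "Suc t < q" "q \<le> n" "P p" "P q" "\<And>d. p < d \<Longrightarrow> d < q \<Longrightarrow> \<not> P d"
proof -
  define p where "p = Max {d. d \<le> t \<and> P d}"
  define q where "q = (LEAST d. t < d \<and> P d)"
  have "p \<in> {d. d \<le> t \<and> P d}"
    unfolding p_def using assms(1) by (intro Max_in) auto
  then have p: "p \<le> t" "P p" by auto
  have p_max: "d \<le> p" if "d \<le> t" "P d" for d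
    unfolding p_def using that by (intro Max_ge) auto
  have q: "t < q" "P q"
    unfolding q_def using LeastI[of "\<lambda>d. t < d \<and> P d" n] assms(2,3) by auto
  have q_min: "\<not> P d" if "t < d" "d < q" for d
    using not_less_Least[of d "\<lambda>d. t < d \<and> P d"] that unfolding q_def by blast
  show thesis
  proof (rule that)
    show "p < t" using p assms(4) by (cases "p = t") auto
    show "Suc t < q" using q assms(5) by (cases "q = Suc t") auto
    show "q \<le> n" unfolding q_def using assms(2,3) by (intro Least_le) simp
    show "\<not> P d" if "p < d" "d < q" for d
      using p_max[of d] q_min[of d] that by (cases "d \<le> t") auto
  qed (use p q in auto)
qed

section \<open>Exchanging non-terminals of a dominant solution\<close>

lemma dominant_exchange_creates_S_cycle:
  assumes "multigraph V E ends" "dominant V E ends S k X"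
    and Y: "Y \<subseteq> X - VS ends S" "Y \<noteq> {}"
    and Z: "Z \<subseteq> V - X" "Z \<subseteq> VS ends S" "card Z \<le> card Y"
  shows "has_S_cycle (V - (X - Y \<union> Z)) (edges_del E ends (X - Y \<union> Z)) ends S"
proof (rule ccontr)
  let ?X' = "X - Y \<union> Z" and ?T = "VS ends S"
  assume no_cycle: "\<not> ?thesis"
  have X: "X \<subseteq> V" "card X \<le> k"
    and minimum: "\<And>X'. is_solution V E ends S k X' \<Longrightarrow> card X \<le> card X'"
    and dominant: "\<And>X'. is_solution V E ends S k X' \<Longrightarrow> card X' = card X \<Longrightarrow>
                          card (X' \<inter> ?T) \<le> card (X \<inter> ?T)"
    using assms(2) by (auto simp: dominant_def is_solution_def)
  have "finite V" using assms(1) by (simp add: multigraph_def)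
  then have fin: "finite X" "finite Y" "finite Z"
    using X(1) Y(1) Z(1) by (auto intro: finite_subset)
  have "Y \<subseteq> X" using Y(1) by blast
  then have "card Y \<le> card X" using fin by (intro card_mono)
  moreover have card_X': "card ?X' = card X - card Y + card Z"
    using \<open>Y \<subseteq> X\<close> Z(1) fin by (subst card_Un_disjoint) (auto simp: card_Diff_subset)
  ultimately have solution: "is_solution V E ends S k ?X'"
    using X Z no_cycle by (auto simp: is_solution_def)
  with minimum have "card X \<le> card ?X'" .
  with card_X' Z(3) \<open>card Y \<le> card X\<close> have "card Z = card Y" "card ?X' = card X"
    by linarith+
  then have le: "card (?X' \<inter> ?T) \<le> card (X \<inter> ?T)"
    using dominant[OF solution] by blast
  have "?X' \<inter> ?T = X \<inter> ?T \<union> Z" using Y(1) Z by blast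
  moreover have "X \<inter> ?T \<inter> Z = {}" using Z(1) by blast
  ultimately have "card (?X' \<inter> ?T) = card (X \<inter> ?T) + card Z"
    using fin by (simp add: card_Un_disjoint)
  moreover have "card Y > 0" using Y(2) fin by auto
  ultimately show False using le \<open>card Z = card Y\<close> by linarith
qed

section \<open>Components of G - X - S\<close>

locale S_cycle_transversal =
  fixes V :: "'v set" and E :: "'e set" and ends :: "'e \<Rightarrow> 'v \<times> 'v"
    and S :: "'e set" and X :: "'v set"
  assumes multigraph: "multigraph V E ends"
    and no_S_cycle: "\<not> has_S_cycle (V - X) (edges_del E ends X) ends S"
begin

abbreviation edges_GX :: "'e set" where
  "edges_GX \<equiv> edges_del E ends X"

abbreviation comp_GXS :: "'v \<Rightarrow> 'v set" where
  "comp_GXS v \<equiv> {w \<in> V - X. reach ends (edges_GX - S) v w}"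

abbreviation conn :: "'e set \<Rightarrow> 'v set \<Rightarrow> 'v set \<Rightarrow> bool" where
  "conn D A B \<equiv> \<exists>u\<in>A. \<exists>w\<in>B. reach ends (edges_GX - D) u w"

definition separates :: "'e set \<Rightarrow> 'v set set \<Rightarrow> bool" where
  "separates D C \<longleftrightarrow> (\<forall>A\<in>C. \<forall>B\<in>C. conn D A B \<longrightarrow> A = B)"

abbreviation seen_interesting :: "'v set \<Rightarrow> 'v set set" where
  "seen_interesting Y \<equiv> {K \<in> components_GXS V E ends S X.
      K \<inter> VS ends S \<noteq> {} \<and> (\<exists>y\<in>Y. sees E ends y K)}"

lemma edges_GX_endpoints: "g \<in> edges_GX \<Longrightarrow> fst (ends g) \<in> V - X \<and> snd (ends g) \<in> V - X"
  using multigraph by (auto simp: multigraph_def edges_del_def)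

lemma joins_edges_GX: "g \<in> edges_GX \<Longrightarrow> joins ends g x y \<Longrightarrow> x \<in> V - X \<and> y \<in> V - X"
  using edges_GX_endpoints[of g] joins_endpoints[of ends g x y] by auto

lemma components_GXS_eq: "components_GXS V E ends S X = comp_GXS ` (V - X)"
proof -
  have "adj_GXS V E ends S X = adj_via ends (edges_GX - S)"
    by (intro ext) (auto simp: adj_GXS_def adj_via_def dest: joins_edges_GX)
  then show ?thesis by (auto simp: components_GXS_def)
qed

lemma finite_components_GXS: "finite (components_GXS V E ends S X)"
  using multigraph by (simp add: components_GXS_eq multigraph_def)

lemma comp_GXS_reach: "x \<in> comp_GXS v \<Longrightarrow> y \<in> comp_GXS v \<Longrightarrow> reach ends (edges_GX - S) x y"
  by (auto intro: rtranclp_trans reach_sym)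

lemma comp_GXS_eq: "reach ends (edges_GX - S) v w \<Longrightarrow> comp_GXS v = comp_GXS w"
  by (auto intro: rtranclp_trans reach_sym)

lemma conn_sym:
  assumes "conn D A B"
  shows "conn D B A"
proof -
  from assms obtain u w where uw: "u \<in> A" "w \<in> B" "reach ends (edges_GX - D) u w" by blast
  from reach_sym[OF uw(3)] uw(1,2) show ?thesis by blast
qed

lemma conn_mono:
  assumes "conn D A B" "D' \<subseteq> D"
  shows "conn D' A B"
proof -
  from assms(1) obtain u w where uw: "u \<in> A" "w \<in> B" "reach ends (edges_GX - D) u w" by blast
  from uw(3) have "reach ends (edges_GX - D') u w" by (rule reach_mono) (use assms(2) in blast)
  with uw(1,2) show ?thesis by blast
qed

lemma conn_trans:
  assumes "conn D A B" "conn D B C" "B \<in> comp_GXS ` (V - X)" "D \<subseteq> S"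
  shows "conn D A C"
proof -
  from assms(1,2) obtain u w w' x where "u \<in> A" "w \<in> B" "reach ends (edges_GX - D) u w"
    "w' \<in> B" "x \<in> C" "reach ends (edges_GX - D) w' x" by blast
  moreover have "reach ends (edges_GX - S) w w'"
    using assms(3) \<open>w \<in> B\<close> \<open>w' \<in> B\<close> comp_GXS_reach by blast
  then have "reach ends (edges_GX - D) w w'" by (rule reach_mono) (use assms(4) in blast)
  ultimately show ?thesis by (meson rtranclp_trans)
qed

lemma S_edge_is_bridge:
  assumes "e \<in> edges_GX" "e \<in> S" "joins ends e a b"
  shows "\<not> reach ends (edges_GX - {e}) a b"
proof
  assume "reach ends (edges_GX - {e}) a b"
  with assms have "has_S_cycle (V - X) edges_GX ends S"
    by (intro has_S_cycleI[OF edges_GX_endpoints])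
  with no_S_cycle show False by contradiction
qed

lemma not_reach_across_S_edge:
  assumes walk: "is_walk ends edges_GX v f i j" and inj: "inj_on f {i..<j}"
    and t: "i \<le> t" "t < j" "f t \<in> S"
  shows "\<not> reach ends (edges_GX - S) (v i) (v j)"
proof
  let ?F = "edges_GX - {f t}"
  assume "reach ends (edges_GX - S) (v i) (v j)"
  then have ij: "reach ends ?F (v i) (v j)" by (rule reach_mono) (use t(3) in blast)
  have "f d \<in> ?F \<and> joins ends (f d) (v d) (v (Suc d))"
    if "i \<le> d" "d < j" "d \<noteq> t" for d
    using walk that inj_onD[OF inj, of d t] t by (auto simp: is_walk_def)
  then have "is_walk ends ?F v f i t" "is_walk ends ?F v f (Suc t) j"
    using t by (auto simp: is_walk_def)
  then have "reach ends ?F (v i) (v t)" "reach ends ?F (v (Suc t)) (v j)"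
    using t by (auto intro: is_walk_reach)
  with ij have "reach ends ?F (v t) (v (Suc t))"
    by (metis reach_sym rtranclp_trans)
  moreover have "f t \<in> edges_GX" "joins ends (f t) (v t) (v (Suc t))"
    using walk t by (auto simp: is_walk_def)
  ultimately show False using S_edge_is_bridge t(3) by blast
qed

lemma separating_S_edge:
  assumes A: "A \<in> comp_GXS ` (V - X)" and B: "B \<in> comp_GXS ` (V - X)" and "A \<noteq> B"
    and D: "D \<subseteq> S" and "conn D A B"
  shows "\<exists>e \<in> edges_GX \<inter> S - D. \<not> conn (insert e D) A B"
proof -
  from \<open>conn D A B\<close> obtain u w where u: "u \<in> A" and w: "w \<in> B"
    and uw: "reach ends (edges_GX - D) u w" by blast
  obtain m v f where path: "is_walk ends (edges_GX - D) v f 0 m" "v 0 = u" "v m = w"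
    "inj_on v {0..m}" "inj_on f {0..<m}"
    using uw by (rule reach_imp_path)
  have "\<exists>i<m. f i \<in> S"
  proof (rule ccontr)
    assume "\<not> (\<exists>i<m. f i \<in> S)"
    with path(1) have "is_walk ends (edges_GX - S) v f 0 m" by (auto simp: is_walk_def)
    then have "reach ends (edges_GX - S) u w" using path(2,3) is_walk_reach by fastforce
    then have "comp_GXS u = comp_GXS w" by (rule comp_GXS_eq)
    moreover have "A = comp_GXS u" "B = comp_GXS w"
      using A B u w comp_GXS_eq by auto
    ultimately show False using \<open>A \<noteq> B\<close> by simp
  qed
  define i where "i = (LEAST i. i < m \<and> f i \<in> S)"
  have i: "i < m" "f i \<in> S"
    using LeastI_ex[OF \<open>\<exists>i<m. f i \<in> S\<close>] unfolding i_def by auto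
  have "f d \<notin> S" if "d < i" for d
    using not_less_Least[of d "\<lambda>i. i < m \<and> f i \<in> S"] that i(1) unfolding i_def by auto
  with path(1) i(1) have before: "is_walk ends (edges_GX - S) v f 0 i"
    by (auto simp: is_walk_def)
  have "f d \<noteq> f i" if "i < d" "d < m" for d
    using inj_onD[OF path(5), of d i] that i(1) by auto
  with path(1) have after: "is_walk ends (edges_GX - insert (f i) D) v f (Suc i) m"
    by (auto simp: is_walk_def)
  have e: "f i \<in> edges_GX" "f i \<notin> D" "joins ends (f i) (v i) (v (Suc i))"
    using path(1) i(1) by (auto simp: is_walk_def)
  have "\<not> conn (insert (f i) D) A B"
  proof
    let ?F = "edges_GX - {f i}"
    assume "conn (insert (f i) D) A B"
    then obtain u' w' where "u' \<in> A" "w' \<in> B" "reach ends ?F u' w'"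
      by (blast intro: reach_mono)
    moreover have "reach ends ?F u u'" "reach ends ?F w' w"
      using A B u w \<open>u' \<in> A\<close> \<open>w' \<in> B\<close> comp_GXS_reach i(2) by (blast intro: reach_mono)+
    moreover have "reach ends ?F (v i) u" "reach ends ?F w (v (Suc i))"
      using is_walk_reach[OF before] is_walk_reach[OF after] path(2,3) i(1) i(2)
      by (auto intro: reach_mono reach_sym)
    ultimately have "reach ends ?F (v i) (v (Suc i))" by (meson rtranclp_trans)
    with e i(2) S_edge_is_bridge show False by blast
  qed
  with e i(2) show ?thesis by blast
qed

lemma separatesD: "separates D C \<Longrightarrow> A \<in> C \<Longrightarrow> B \<in> C \<Longrightarrow> conn D A B \<Longrightarrow> A = B"
  unfolding separates_def by blast

lemma separates_mono:
  assumes "separates D C" "D \<subseteq> D'"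
  shows "separates D' C"
  unfolding separates_def
proof (intro ballI impI)
  fix A B assume "A \<in> C" "B \<in> C" "conn D' A B"
  with conn_mono[OF \<open>conn D' A B\<close> assms(2)] assms(1) show "A = B"
    unfolding separates_def by blast
qed

lemma separates_split:
  assumes C: "C \<subseteq> comp_GXS ` (V - X)" and D0: "D0 \<subseteq> D" "D0 \<subseteq> S"
    and sep: "separates D {K \<in> C. conn D0 K K0}" "separates D {K \<in> C. \<not> conn D0 K K0}"
  shows "separates D C"
proof -
  have cross: "\<not> conn D A B" if "A \<in> C" "conn D0 A K0" "\<not> conn D0 B K0" for A B
  proof
    assume "conn D A B"
    with D0(1) have "conn D0 B A" by (blast intro: conn_sym[OF conn_mono])
    moreover have "A \<in> comp_GXS ` (V - X)" using C \<open>A \<in> C\<close> by blast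
    ultimately have "conn D0 B K0" using conn_trans[OF _ \<open>conn D0 A K0\<close> _ D0(2)] by blast
    with \<open>\<not> conn D0 B K0\<close> show False by contradiction
  qed
  show ?thesis
    unfolding separates_def
  proof (intro ballI impI)
    fix A B assume AB: "A \<in> C" "B \<in> C" "conn D A B"
    show "A = B"
    proof (cases "conn D0 A K0")
      case True
      with AB cross have "conn D0 B K0" by blast
      with True AB show ?thesis by (intro separatesD[OF sep(1)]) auto
    next
      case False
      with AB cross[of B A] conn_sym[OF AB(3)] have "\<not> conn D0 B K0" by blast
      with False AB show ?thesis by (intro separatesD[OF sep(2)]) auto
    qed
  qed
qed

text \<open>Every S-edge of G - X is a bridge, so the S-edges form a forest over the components
  of G - X - S. Cutting one S-edge on a path between two components of C splits C into two
  nonempty parts that are then separated independently; altogether |C| - 1 edges suffice.\<close>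
lemma separating_S_edges_extend:
  assumes "finite C" "C \<noteq> {}" "C \<subseteq> comp_GXS ` (V - X)" "D0 \<subseteq> edges_GX \<inter> S" "finite D0"
  shows "\<exists>D. D0 \<subseteq> D \<and> D \<subseteq> edges_GX \<inter> S \<and> finite D \<and> card D + 1 \<le> card D0 + card C \<and>
             separates D C"
  using assms
proof (induction "card C" arbitrary: C D0 rule: less_induct)
  case less
  show ?case
  proof (cases "separates D0 C")
    case True
    have "card D0 + 1 \<le> card D0 + card C"
      using less.prems(1,2) by (simp add: Suc_le_eq card_gt_0_iff)
    with True less.prems(4,5) show ?thesis by blast
  next
    case False
    then obtain K1 K2 where K: "K1 \<in> C" "K2 \<in> C" "K1 \<noteq> K2" "conn D0 K1 K2"
      unfolding separates_def by blast
    have "K1 \<in> comp_GXS ` (V - X)" "K2 \<in> comp_GXS ` (V - X)" "D0 \<subseteq> S"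
      using K(1,2) less.prems(3,4) by blast+
    from separating_S_edge[OF this(1,2) K(3) this(3) K(4)]
    obtain e where e: "e \<in> edges_GX \<inter> S - D0" "\<not> conn (insert e D0) K1 K2"
      by blast
    define D0' where "D0' = insert e D0"
    define C1 where "C1 = {K \<in> C. conn D0' K K2}"
    define C2 where "C2 = {K \<in> C. \<not> conn D0' K K2}"
    from \<open>K2 \<in> comp_GXS ` (V - X)\<close> obtain v2 where "v2 \<in> V - X" "K2 = comp_GXS v2" by blast
    then have "conn D0' K2 K2" by (blast intro: rtranclp.rtrancl_refl)
    with K(1,2) e(2) have "K2 \<in> C1" "K1 \<in> C2" by (simp_all add: C1_def C2_def D0'_def)
    then have C12: "C1 \<subset> C" "C2 \<subset> C" "C1 \<noteq> {}" "C2 \<noteq> {}" "C = C1 \<union> C2" "C1 \<inter> C2 = {}"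
      unfolding C1_def C2_def by blast+
    have D0': "D0' \<subseteq> edges_GX \<inter> S" "finite D0'" "card D0' = card D0 + 1"
      using e less.prems(4,5) by (auto simp: D0'_def)
    have C12_comps: "finite C1" "C1 \<subseteq> comp_GXS ` (V - X)" "finite C2" "C2 \<subseteq> comp_GXS ` (V - X)"
      using C12(1,2) less.prems(1,3) by (meson finite_subset psubset_imp_subset subset_trans)+
    from less.hyps[OF psubset_card_mono[OF less.prems(1) C12(1)] C12_comps(1) C12(3) C12_comps(2)
        D0'(1,2)]
    obtain D1 where D1: "D0' \<subseteq> D1" "D1 \<subseteq> edges_GX \<inter> S" "finite D1"
      "card D1 + 1 \<le> card D0' + card C1" "separates D1 C1"
      by blast
    from less.hyps[OF psubset_card_mono[OF less.prems(1) C12(2)] C12_comps(3) C12(4) C12_comps(4)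
        D1(2,3)]
    obtain D where D: "D1 \<subseteq> D" "D \<subseteq> edges_GX \<inter> S" "finite D"
      "card D + 1 \<le> card D1 + card C2" "separates D C2"
      by blast
    have "D0' \<subseteq> D" "D0' \<subseteq> S" using D(1) D1(1) D0'(1) by blast+
    with less.prems(3) have "separates D C"
      using separates_mono[OF D1(5) D(1)] D(5) unfolding C1_def C2_def by (rule separates_split)
    moreover have "card C = card C1 + card C2"
      using C12 less.prems(1) by (simp add: card_Un_disjoint)
    then have "card D + 1 \<le> card D0 + card C"
      using D(4) D1(4) D0'(3) by linarith
    moreover have "D0 \<subseteq> D" using D(1) D1(1) by (auto simp: D0'_def)
    ultimately show ?thesis using D(2,3) by blast
  qed
qed

lemma separating_S_edges:
  assumes "C \<subseteq> components_GXS V E ends S X"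
  obtains D where "D \<subseteq> edges_GX \<inter> S" "finite D" "card D \<le> card C - 1" "separates D C"
proof (cases "C = {}")
  case True
  then show thesis by (intro that[of "{}"]) (auto simp: separates_def)
next
  case False
  have fin: "finite C" using assms finite_components_GXS by (rule finite_subset)
  have comps: "C \<subseteq> comp_GXS ` (V - X)" using assms components_GXS_eq by simp
  note separating_S_edges_extend[OF fin False comps empty_subsetI finite.emptyI]
  then obtain D where D: "D \<subseteq> edges_GX \<inter> S" "finite D" "card D + 1 \<le> card C" "separates D C"
    by auto
  show thesis by (rule that[OF D(1,2) _ D(4)]) (use D(3) in simp)
qed

text \<open>Leaving a component of G - X - S inside G - X requires an S-edge, and the endpoints of
  S-edges lie in V(S).\<close>
lemma comp_GXS_meets_VS:
  assumes "reach ends edges_GX u a" "u \<in> V - X" "a \<in> VS ends S"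
  shows "comp_GXS u \<inter> VS ends S \<noteq> {}"
proof
  assume disjoint: "comp_GXS u \<inter> VS ends S = {}"
  have "x \<in> comp_GXS u" if "reach ends edges_GX u x" for x
    using that
  proof (induction rule: rtranclp_induct)
    case (step y z)
    then obtain g where g: "g \<in> edges_GX" "joins ends g y z" by (auto simp: adj_via_def)
    have "g \<notin> S"
    proof
      assume "g \<in> S"
      then have "y \<in> VS ends S" using joins_endpoints[OF g(2)] by (auto simp: VS_def)
      with step.IH disjoint show False by blast
    qed
    with g have "reach ends (edges_GX - S) y z" by (intro reach_edge) auto
    with step.IH joins_edges_GX[OF g] show ?case by (auto intro: rtranclp_trans)
  qed (use assms(2) in simp)
  with assms disjoint show False by blast
qed

lemma comp_GXS_seen_interesting:
  assumes "u \<in> V - X" "y \<in> Y" "g \<in> E" "joins ends g y u"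
    and "reach ends edges_GX u a" "a \<in> VS ends S"
  shows "comp_GXS u \<in> seen_interesting Y"
proof -
  have "u \<in> comp_GXS u" using assms(1) by simp
  then have "sees E ends y (comp_GXS u)" using assms(3,4) by (auto simp: sees_def)
  moreover have "comp_GXS u \<in> components_GXS V E ends S X"
    using assms(1) by (simp add: components_GXS_eq)
  ultimately show ?thesis
    using comp_GXS_meets_VS[OF assms(5,1,6)] assms(2) by blast
qed

lemma separated_path_avoids_S:
  assumes sep: "separates D C" and walk: "is_walk ends (edges_GX - D) v f i j"
    and inj: "inj_on f {i..<j}" and C: "comp_GXS (v i) \<in> C" "comp_GXS (v j) \<in> C"
    and t: "i \<le> t" "t < j"
  shows "f t \<notin> S"
proof
  assume "f t \<in> S"
  have walk_GX: "is_walk ends edges_GX v f i j" using walk by (rule is_walk_mono) auto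
  have "f i \<in> edges_GX" "joins ends (f i) (v i) (v (Suc i))"
    using walk_GX t by (auto simp: is_walk_def)
  moreover have "f (j - 1) \<in> edges_GX" "joins ends (f (j - 1)) (v (j - 1)) (v (Suc (j - 1)))"
    using walk_GX t unfolding is_walk_def by (auto dest: spec[of _ "j - 1"])
  moreover have "Suc (j - 1) = j" using t by simp
  ultimately have ends: "v i \<in> V - X" "v j \<in> V - X" by (metis joins_edges_GX)+
  have "reach ends (edges_GX - D) (v i) (v j)" using is_walk_reach[OF walk] t by simp
  with ends have "conn D (comp_GXS (v i)) (comp_GXS (v j))" by auto
  with sep C have "comp_GXS (v i) = comp_GXS (v j)" by (rule separatesD)
  with ends have "reach ends (edges_GX - S) (v i) (v j)"
    by (intro comp_GXS_reach[of _ "v j"]) auto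
  with not_reach_across_S_edge[OF walk_GX inj t \<open>f t \<in> S\<close>] show False by contradiction
qed

lemma no_S_edge_on_exchange_closed_walk:
  assumes Y: "Y \<subseteq> X - VS ends S" and sep: "separates D (seen_interesting Y)"
    and Z: "\<And>e. e \<in> D \<Longrightarrow> fst (ends e) \<in> Z \<or> snd (ends e) \<in> Z"
    and joins: "\<And>d. joins ends (ff d) (vv d) (vv (Suc d))" and in_E: "\<And>d. d < n \<Longrightarrow> ff d \<in> E"
    and outside: "\<And>d. vv d \<in> V - (X - Y \<union> Z)" and inj: "inj_on ff {..<n}"
    and closed: "vv 0 \<in> Y" "vv n \<in> Y" and "t < n"
  shows "ff t \<notin> S"
proof
  assume "ff t \<in> S"
  then have "vv t \<in> VS ends S" "vv (Suc t) \<in> VS ends S"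
    using joins_endpoints[OF joins[of t]] by (auto simp: VS_def)
  then have "vv t \<notin> Y" "vv (Suc t) \<notin> Y" using Y by blast+
  with enclosing_gap[of "\<lambda>d. vv d \<in> Y" n t] closed \<open>t < n\<close>
  obtain p q where pq: "p < t" "Suc t < q" "q \<le> n" "vv p \<in> Y" "vv q \<in> Y"
    and gap: "\<And>d. p < d \<Longrightarrow> d < q \<Longrightarrow> vv d \<notin> Y"
    by blast
  have inner: "vv d \<in> V - X \<and> vv d \<notin> Z" if "p < d" "d < q" for d
    using gap[OF that] outside[of d] by blast
  have walk: "is_walk ends (edges_GX - D) vv ff (Suc p) (q - 1)"
    unfolding is_walk_def
  proof (intro allI impI)
    fix d assume "Suc p \<le> d" "d < q - 1"
    then have "vv d \<in> V - X \<and> vv d \<notin> Z" "vv (Suc d) \<in> V - X \<and> vv (Suc d) \<notin> Z" "ff d \<in> E"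
      using inner in_E pq by auto
    then show "ff d \<in> edges_GX - D \<and> joins ends (ff d) (vv d) (vv (Suc d))"
      using joins_endpoints[OF joins[of d]] Z[of "ff d"] joins[of d] by (auto simp: edges_del_def)
  qed
  then have walk_GX: "is_walk ends edges_GX vv ff i j" if "Suc p \<le> i" "j \<le> q - 1" for i j
    using that by (rule is_walk_mono) auto
  let ?u = "vv (Suc p)" and ?w = "vv (q - 1)"
  have "Suc (q - 1) = q" using pq by simp
  have u: "?u \<in> V - X" and w: "?w \<in> V - X" using inner pq by auto
  have "reach ends edges_GX ?u (vv t)"
    using is_walk_reach[OF walk_GX[of "Suc p" t]] pq by simp
  moreover have "ff p \<in> E" using in_E pq by simp
  ultimately have u_seen: "comp_GXS ?u \<in> seen_interesting Y"
    using comp_GXS_seen_interesting[OF u pq(4) _ joins[of p] _ \<open>vv t \<in> VS ends S\<close>] by simp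
  have "reach ends edges_GX ?w (vv (Suc t))"
    using is_walk_reach[OF walk_GX[of "Suc t" "q - 1"]] pq by (auto intro: reach_sym)
  moreover have "ff (q - 1) \<in> E" "joins ends (ff (q - 1)) (vv q) ?w"
    using in_E[of "q - 1"] joins[of "q - 1"] pq \<open>Suc (q - 1) = q\<close> by (auto intro: joins_sym)
  ultimately have w_seen: "comp_GXS ?w \<in> seen_interesting Y"
    using comp_GXS_seen_interesting[OF w pq(5) _ _ _ \<open>vv (Suc t) \<in> VS ends S\<close>] by simp
  have "inj_on ff {Suc p..<q - 1}"
    by (rule inj_on_subset[OF inj]) (use pq in auto)
  with separated_path_avoids_S[OF sep walk this u_seen w_seen] \<open>ff t \<in> S\<close> pq show False
    by auto
qed

lemma exchange_no_S_cycle: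
  assumes Y: "Y \<subseteq> X - VS ends S" and sep: "separates D (seen_interesting Y)"
    and Z: "\<And>e. e \<in> D \<Longrightarrow> fst (ends e) \<in> Z \<or> snd (ends e) \<in> Z"
  shows "\<not> has_S_cycle (V - (X - Y \<union> Z)) (edges_del E ends (X - Y \<union> Z)) ends S"
proof
  let ?X' = "X - Y \<union> Z"
  assume "has_S_cycle (V - ?X') (edges_del E ends ?X') ends S"
  then obtain vs es where cycle: "is_cycle (V - ?X') (edges_del E ends ?X') ends vs es"
    and "set es \<inter> S \<noteq> {}"
    by (auto simp: has_S_cycle_def)
  have vs: "set vs \<subseteq> V - ?X'" and es: "set es \<subseteq> E"
    using cycle by (auto simp: is_cycle_def edges_del_def)
  show False
  proof (cases "set vs \<inter> Y = {}")
    case True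
    with vs have "set vs \<subseteq> V - X" by blast
    with cycle es have "is_cycle (V - X) edges_GX ends vs es" by (rule is_cycle_edges_del)
    with \<open>set es \<inter> S \<noteq> {}\<close> have "has_S_cycle (V - X) edges_GX ends S"
      unfolding has_S_cycle_def by blast
    with no_S_cycle show False by contradiction
  next
    case False
    then obtain j where j: "j < length vs" "vs ! j \<in> Y" by (auto simp: in_set_conv_nth)
    obtain vv ff where vv: "vv 0 = vs ! j" "vv (length vs) = vs ! j" "\<And>d. vv d \<in> set vs"
      and ff: "\<And>d. joins ends (ff d) (vv d) (vv (Suc d))" "inj_on ff {..<length vs}"
        "ff ` {..<length vs} = set es"
      by (rule is_cycle_unroll[OF cycle j(1)]) blast
    from \<open>set es \<inter> S \<noteq> {}\<close> obtain g where "g \<in> set es" "g \<in> S" by blast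
    with ff(3) obtain t where "t < length vs" "ff t \<in> S" by (metis imageE lessThan_iff)
    moreover have "ff d \<in> E" if "d < length vs" for d
      using that ff(3) es by blast
    moreover have "vv d \<in> V - ?X'" for d using vv(3) vs by blast
    moreover have "vv 0 \<in> Y" "vv (length vs) \<in> Y" using vv(1,2) j(2) by simp_all
    ultimately show False
      using no_S_edge_on_exchange_closed_walk[OF Y sep Z ff(1) _ _ ff(2)] by blast
  qed
qed

end

theorem lemma5:
  fixes V :: "'v set" and E :: "'e set" and ends :: "'e \<Rightarrow> 'v \<times> 'v"
    and S :: "'e set" and k :: nat and X Y :: "'v set"
  assumes "multigraph V E ends"
    and "S \<subseteq> E"
    and "dominant V E ends S k X"
    and "Y \<subseteq> X - VS ends S"
    and "Y \<noteq> {}"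
  shows "card {K \<in> components_GXS V E ends S X.
                 K \<inter> VS ends S \<noteq> {} \<and> (\<exists>y\<in>Y. sees E ends y K)} \<ge> card Y + 2"
proof (rule ccontr)
  interpret S_cycle_transversal V E ends S X
    using assms(1,3) by unfold_locales (auto simp: dominant_def is_solution_def)
  assume "\<not> ?thesis"
  then have few: "card (seen_interesting Y) \<le> card Y + 1" by simp
  have "seen_interesting Y \<subseteq> components_GXS V E ends S X" by blast
  then obtain D where D: "D \<subseteq> edges_GX \<inter> S" "finite D" "card D \<le> card (seen_interesting Y) - 1"
    "separates D (seen_interesting Y)"
    by (rule separating_S_edges)
  define Z where "Z = (\<lambda>e. fst (ends e)) ` D"
  have "\<not> has_S_cycle (V - (X - Y \<union> Z)) (edges_del E ends (X - Y \<union> Z)) ends S"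
    by (rule exchange_no_S_cycle[OF assms(4) D(4)]) (simp add: Z_def)
  moreover have "Z \<subseteq> V - X" "Z \<subseteq> VS ends S"
    using D(1) edges_GX_endpoints by (auto simp: Z_def VS_def)
  moreover have "card Z \<le> card Y"
    using card_image_le[OF D(2), of "\<lambda>e. fst (ends e)"] D(3) few unfolding Z_def by linarith
  ultimately show False
    using dominant_exchange_creates_S_cycle[OF assms(1,3,4,5)] by blast
qed

end
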